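(* In the drift-less setting, let $\rho_d=|\Psi\rangle\langle\Psi|$ be QLS but not DQLS, and suppose $\mathcal H_0=\mathrm{span}\{|\Psi\rangle,|\Phi_1\rangle\}$ with $|\Psi\rangle,|\Phi_1\rangle$ orthonormal. Then there exists a QL Hamiltonian $H_c$ such that $H_c|\Psi\rangle=0$ and $H_c|\Phi_1\rangle\notin\mathcal H_0$.
   Context: $\mathcal H=\bigotimes_{a=1}^n\mathcal H_a$ finite-dimensional with neighborhoods $\mathcal N_k\subsetneq\{1,\dots,n\}$. QL operator: $X_{\mathcal N_k}\otimes I_{\bar{\mathcal N}_k}$; QL Hamiltonian: sum of Hermitian QL operators. $\mathcal L(H,\{D_k\})(\rho)=-i[H,\rho]+\sum_k(D_k\rho D_k^\dagger-\frac12\{D_k^\dagger D_k,\rho\})$. GAS: $e^{\mathcal Lt}(\rho_0)\to\rho_d$ for every density operator $\rho_0$. QLS: there exist a QL Hamiltonian $H_c$ and QL $D_k$ with $D_k|\Psi\rangle=0$, $H_c|\Psi\rangle\in\mathbb R|\Psi\rangle$, making $\rho_d$ GAS for $\mathcal L(H_c,\{D_k\})$; DQLS: same with $H_c=0$. $\mathcal H_0=\bigcap_k\mathrm{supp}(\rho_{\mathcal N_k}\otimes I_{\bar{\mathcal N}_k})$, $\rho_{\mathcal N_k}=\mathrm{Tr}_{\bar{\mathcal N}_k}\rho_d$. *)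

theory Defs
  imports Complex_Main "HOL-Library.FuncSet"
begin

text \<open>
  Composite system of n subsystems (indexed 0..<n), subsystem a having
  dimension d a.  Computational basis states of the whole system are
  configurations x : {..<n} -> nat with x a < d a (extensional functions).
  Vectors are functions cfg => complex, operators cfg => cfg => complex
  (matrix entries w.r.t. the product basis); only entries on the basis
  configurations are meaningful.
\<close>

type_synonym cfg = "nat \<Rightarrow> nat"
type_synonym vec = "cfg \<Rightarrow> complex"
type_synonym op = "cfg \<Rightarrow> cfg \<Rightarrow> complex"

definition cfgs :: "nat \<Rightarrow> (nat \<Rightarrow> nat) \<Rightarrow> cfg set" where
  "cfgs n d = PiE {..<n} (\<lambda>a. {..<d a})"

definition cfgs_on :: "nat set \<Rightarrow> (nat \<Rightarrow> nat) \<Rightarrow> cfg set" where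
  "cfgs_on A d = PiE A (\<lambda>a. {..<d a})"

definition is_vec :: "nat \<Rightarrow> (nat \<Rightarrow> nat) \<Rightarrow> vec \<Rightarrow> bool" where
  "is_vec n d v \<longleftrightarrow> (\<forall>x. x \<notin> cfgs n d \<longrightarrow> v x = 0)"

definition inner :: "nat \<Rightarrow> (nat \<Rightarrow> nat) \<Rightarrow> vec \<Rightarrow> vec \<Rightarrow> complex" where
  "inner n d v w = (\<Sum>x\<in>cfgs n d. cnj (v x) * w x)"

definition apply_op :: "nat \<Rightarrow> (nat \<Rightarrow> nat) \<Rightarrow> op \<Rightarrow> vec \<Rightarrow> vec" where
  "apply_op n d X v = (\<lambda>x. if x \<in> cfgs n d then (\<Sum>y\<in>cfgs n d. X x y * v y) else 0)"

definition opmul :: "nat \<Rightarrow> (nat \<Rightarrow> nat) \<Rightarrow> op \<Rightarrow> op \<Rightarrow> op" where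
  "opmul n d X Y = (\<lambda>x z. if x \<in> cfgs n d \<and> z \<in> cfgs n d
       then (\<Sum>y\<in>cfgs n d. X x y * Y y z) else 0)"

definition adj :: "op \<Rightarrow> op" where
  "adj X = (\<lambda>x y. cnj (X y x))"

definition hermitian :: "nat \<Rightarrow> (nat \<Rightarrow> nat) \<Rightarrow> op \<Rightarrow> bool" where
  "hermitian n d X \<longleftrightarrow> (\<forall>x\<in>cfgs n d. \<forall>y\<in>cfgs n d. X x y = cnj (X y x))"

definition proj :: "vec \<Rightarrow> op" where
  "proj \<Psi> = (\<lambda>x y. \<Psi> x * cnj (\<Psi> y))"

definition density :: "nat \<Rightarrow> (nat \<Rightarrow> nat) \<Rightarrow> op \<Rightarrow> bool" where
  "density n d \<rho> \<longleftrightarrow> hermitian n d \<rho>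
     \<and> (\<forall>v. 0 \<le> Re (inner n d v (apply_op n d \<rho> v)))
     \<and> (\<Sum>x\<in>cfgs n d. \<rho> x x) = 1"

text \<open>Quasi-local operator w.r.t. neighborhood N: X = X_N \<otimes> I_{complement of N}.\<close>
definition QL_op :: "nat \<Rightarrow> (nat \<Rightarrow> nat) \<Rightarrow> nat set \<Rightarrow> op \<Rightarrow> bool" where
  "QL_op n d N X \<longleftrightarrow> (\<exists>Y :: op. \<forall>x\<in>cfgs n d. \<forall>y\<in>cfgs n d.
      X x y = (if (\<forall>a\<in>{..<n} - N. x a = y a)
               then Y (restrict x N) (restrict y N) else 0))"

definition QL :: "nat \<Rightarrow> (nat \<Rightarrow> nat) \<Rightarrow> (nat \<Rightarrow> nat set) \<Rightarrow> nat \<Rightarrow> op \<Rightarrow> bool" where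
  "QL n d Nb m X \<longleftrightarrow> (\<exists>k<m. QL_op n d (Nb k) X)"

definition QL_Ham :: "nat \<Rightarrow> (nat \<Rightarrow> nat) \<Rightarrow> (nat \<Rightarrow> nat set) \<Rightarrow> nat \<Rightarrow> op \<Rightarrow> bool" where
  "QL_Ham n d Nb m H \<longleftrightarrow> (\<exists>Hs :: op list.
      (\<forall>X\<in>set Hs. hermitian n d X \<and> QL n d Nb m X)
      \<and> (\<forall>x\<in>cfgs n d. \<forall>y\<in>cfgs n d. H x y = sum_list (map (\<lambda>X. X x y) Hs)))"

definition lindblad :: "nat \<Rightarrow> (nat \<Rightarrow> nat) \<Rightarrow> op \<Rightarrow> op list \<Rightarrow> op \<Rightarrow> op" where
  "lindblad n d H Ds \<rho> = (\<lambda>x y.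
      - \<i> * (opmul n d H \<rho> x y - opmul n d \<rho> H x y)
      + sum_list (map (\<lambda>D. opmul n d (opmul n d D \<rho>) (adj D) x y
            - (1/2) * (opmul n d (opmul n d (adj D) D) \<rho> x y
                       + opmul n d \<rho> (opmul n d (adj D) D) x y)) Ds))"

definition expL :: "(op \<Rightarrow> op) \<Rightarrow> real \<Rightarrow> op \<Rightarrow> op" where
  "expL L t \<rho> = (\<lambda>x y. (\<Sum>k. complex_of_real (t ^ k / fact k) * (L ^^ k) \<rho> x y))"

definition GAS :: "nat \<Rightarrow> (nat \<Rightarrow> nat) \<Rightarrow> (op \<Rightarrow> op) \<Rightarrow> op \<Rightarrow> bool" where
  "GAS n d L \<rho>d \<longleftrightarrow> (\<forall>\<rho>0. density n d \<rho>0 \<longrightarrow>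
      (\<forall>x\<in>cfgs n d. \<forall>y\<in>cfgs n d. ((\<lambda>t. expL L t \<rho>0 x y) \<longlongrightarrow> \<rho>d x y) at_top))"

definition QLS :: "nat \<Rightarrow> (nat \<Rightarrow> nat) \<Rightarrow> (nat \<Rightarrow> nat set) \<Rightarrow> nat \<Rightarrow> vec \<Rightarrow> bool" where
  "QLS n d Nb m \<Psi> \<longleftrightarrow> (\<exists>Hc Ds. QL_Ham n d Nb m Hc
      \<and> (\<forall>D\<in>set Ds. QL n d Nb m D \<and> apply_op n d D \<Psi> = (\<lambda>_. 0))
      \<and> (\<exists>r::real. apply_op n d Hc \<Psi> = (\<lambda>x. complex_of_real r * \<Psi> x))
      \<and> GAS n d (lindblad n d Hc Ds) (proj \<Psi>))"

definition DQLS :: "nat \<Rightarrow> (nat \<Rightarrow> nat) \<Rightarrow> (nat \<Rightarrow> nat set) \<Rightarrow> nat \<Rightarrow> vec \<Rightarrow> bool" where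
  "DQLS n d Nb m \<Psi> \<longleftrightarrow> (\<exists>Ds.
      (\<forall>D\<in>set Ds. QL n d Nb m D \<and> apply_op n d D \<Psi> = (\<lambda>_. 0))
      \<and> GAS n d (lindblad n d (\<lambda>_ _. 0) Ds) (proj \<Psi>))"

text \<open>rho_N \<otimes> I: partial trace over the complement of N, tensored with identity.\<close>
definition red_ext :: "nat \<Rightarrow> (nat \<Rightarrow> nat) \<Rightarrow> nat set \<Rightarrow> op \<Rightarrow> op" where
  "red_ext n d N \<rho> = (\<lambda>x y. if \<forall>a\<in>{..<n} - N. x a = y a then
      (\<Sum>w\<in>cfgs_on ({..<n} - N) d.
          \<rho> (\<lambda>a. if a \<in> N then x a else w a) (\<lambda>a. if a \<in> N then y a else w a))
      else 0)"

definition supp :: "nat \<Rightarrow> (nat \<Rightarrow> nat) \<Rightarrow> op \<Rightarrow> vec set" where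
  "supp n d X = {apply_op n d X v | v. is_vec n d v}"

definition H0 :: "nat \<Rightarrow> (nat \<Rightarrow> nat) \<Rightarrow> (nat \<Rightarrow> nat set) \<Rightarrow> nat \<Rightarrow> op \<Rightarrow> vec set" where
  "H0 n d Nb m \<rho> = {\<psi>. is_vec n d \<psi> \<and> (\<forall>k<m. \<psi> \<in> supp n d (red_ext n d (Nb k) \<rho>))}"

end

theory Submission
  imports Defs
begin

text \<open>Suppose every QL Hamiltonian annihilating \<open>\<Psi>\<close> maps \<open>\<Phi>1\<close> into
  \<open>\<H>\<^sub>0 = span {\<Psi>, \<Phi>1}\<close>, and let \<open>H\<^sub>c\<close>, \<open>D\<^sub>k\<close> witness QLS with \<open>H\<^sub>c \<Psi> = r \<Psi>\<close>.
  A QL operator \<open>D = Y \<otimes> I\<close> with \<open>D \<Psi> = 0\<close> annihilates \<open>\<rho>\<^sub>N \<otimes> I\<close>, because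
  \<open>Y \<rho>\<^sub>N\<close> is the partial trace of \<open>(Y \<otimes> I) |\<Psi>\<rangle>\<langle>\<Psi>| = 0\<close> over the complement of
  \<open>N\<close>; so every \<open>D\<^sub>k\<close> annihilates \<open>\<H>\<^sub>0\<close>, in particular \<open>\<Phi>1\<close>. The shifted
  Hamiltonian \<open>H\<^sub>c - r I\<close> is again QL and annihilates \<open>\<Psi>\<close>, hence maps \<open>\<Phi>1\<close> into
  \<open>span {\<Psi>, \<Phi>1}\<close>, and being Hermitian it maps \<open>\<Phi>1\<close> to a real multiple of itself.
  (Without neighbourhoods \<open>I\<close> is not QL, but then \<open>H\<^sub>c = 0\<close>.) So \<open>|\<Phi>1\<rangle>\<langle>\<Phi>1|\<close> is a
  stationary state orthogonal to \<open>\<rho>\<^sub>d\<close>, contradicting GAS.\<close>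

lemma finite_cfgs: "finite (cfgs n d)"
  unfolding cfgs_def by (rule finite_PiE) auto

lemma override_on_in_PiE:
  assumes "s \<in> Pi A F" and "w \<in> PiE B F"
  shows "override_on w s A \<in> PiE (A \<union> B) F"
  using assms by (auto simp: PiE_iff override_on_def extensional_def)

lemma override_on_in_cfgs:
  assumes "s \<in> Pi N (\<lambda>a. {..<d a})" and "w \<in> PiE B (\<lambda>a. {..<d a})" and "N \<union> B = {..<n}"
  shows "override_on w s N \<in> cfgs n d"
  using override_on_in_PiE[OF assms(1,2)] assms(3) by (simp add: cfgs_def)

lemma restrict_override_on: "restrict (override_on w s N) N = restrict s N"
  by (simp add: restrict_def fun_eq_iff)

lemma override_on_override_on_left: "override_on (override_on w z N) s N = override_on w s N"
  by (simp add: override_on_def fun_eq_iff)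

lemma override_on_override_on_right: "override_on w (override_on z s N) N = override_on w s N"
  by (simp add: override_on_def fun_eq_iff)

lemma bij_betw_override_on_fiber:
  assumes N: "N \<subseteq> {..<n}" and z: "z \<in> cfgs n d"
  shows "bij_betw (\<lambda>s. override_on z s N) (cfgs_on N d)
           {x \<in> cfgs n d. \<forall>a\<in>{..<n} - N. z a = x a}"
proof (rule bij_betw_byWitness[where f' = "\<lambda>x. restrict x N"])
  show "\<forall>s\<in>cfgs_on N d. restrict (override_on z s N) N = s"
    by (simp add: restrict_override_on cfgs_on_def)
  have z': "z \<in> PiE {..<n} (\<lambda>a. {..<d a})"
    using z by (simp add: cfgs_def)
  have override_in: "override_on z s N \<in> cfgs n d" if "s \<in> Pi N (\<lambda>a. {..<d a})" for s
    using override_on_in_cfgs[OF that z'] N by blast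
  show "\<forall>x\<in>{x \<in> cfgs n d. \<forall>a\<in>{..<n} - N. z a = x a}. override_on z (restrict x N) N = x"
  proof (intro ballI)
    fix x assume x: "x \<in> {x \<in> cfgs n d. \<forall>a\<in>{..<n} - N. z a = x a}"
    have "override_on z (restrict x N) N \<in> cfgs n d"
      using x N by (intro override_in) (auto simp: cfgs_def)
    with x show "override_on z (restrict x N) N = x"
      unfolding cfgs_def by (elim PiE_ext) (auto simp: override_on_def)
  qed
  show "(\<lambda>s. override_on z s N) ` cfgs_on N d \<subseteq> {x \<in> cfgs n d. \<forall>a\<in>{..<n} - N. z a = x a}"
    using override_in by (auto simp: cfgs_on_def)
  show "(\<lambda>x. restrict x N) ` {x \<in> cfgs n d. \<forall>a\<in>{..<n} - N. z a = x a} \<subseteq> cfgs_on N d"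
    using N by (auto simp: cfgs_def cfgs_on_def)
qed

lemma apply_op_QL_op:
  assumes N: "N \<subseteq> {..<n}"
    and D: "\<forall>x\<in>cfgs n d. \<forall>y\<in>cfgs n d.
      D x y = (if \<forall>a\<in>{..<n} - N. x a = y a then Y (restrict x N) (restrict y N) else 0)"
    and z: "z \<in> cfgs n d"
  shows "apply_op n d D v z = (\<Sum>s\<in>cfgs_on N d. Y (restrict z N) s * v (override_on z s N))"
proof -
  have "apply_op n d D v z = (\<Sum>x\<in>cfgs n d.
      if \<forall>a\<in>{..<n} - N. z a = x a then Y (restrict z N) (restrict x N) * v x else 0)"
    using z D by (auto simp: apply_op_def intro!: sum.cong)
  also have "\<dots> = (\<Sum>x\<in>{x \<in> cfgs n d. \<forall>a\<in>{..<n} - N. z a = x a}.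
      Y (restrict z N) (restrict x N) * v x)"
    by (simp add: sum.inter_filter finite_cfgs)
  also have "\<dots> = (\<Sum>s\<in>cfgs_on N d.
      Y (restrict z N) (restrict (override_on z s N) N) * v (override_on z s N))"
    by (rule sum.reindex_bij_betw[OF bij_betw_override_on_fiber[OF N z], symmetric])
  also have "\<dots> = (\<Sum>s\<in>cfgs_on N d. Y (restrict z N) s * v (override_on z s N))"
    by (intro sum.cong) (simp_all add: restrict_override_on cfgs_on_def)
  finally show ?thesis .
qed

lemma red_ext_proj:
  "red_ext n d N (proj \<Psi>) x y = (if \<forall>a\<in>{..<n} - N. x a = y a
     then (\<Sum>w\<in>cfgs_on ({..<n} - N) d. \<Psi> (override_on w x N) * cnj (\<Psi> (override_on w y N)))
     else 0)"
  by (simp add: red_ext_def proj_def override_on_def)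

lemma QL_op_symbol_slice_eq_0:
  assumes N: "N \<subseteq> {..<n}"
    and D: "\<forall>x\<in>cfgs n d. \<forall>y\<in>cfgs n d.
      D x y = (if \<forall>a\<in>{..<n} - N. x a = y a then Y (restrict x N) (restrict y N) else 0)"
    and D\<Psi>: "apply_op n d D \<Psi> = (\<lambda>_. 0)"
    and z: "z \<in> cfgs n d" and w: "w \<in> cfgs_on ({..<n} - N) d"
  shows "(\<Sum>s\<in>cfgs_on N d. Y (restrict z N) s * \<Psi> (override_on w s N)) = 0"
proof -
  \<comment> \<open>the component of \<open>D \<Psi> = 0\<close> at the configuration \<open>override_on w z N\<close>\<close>
  have "override_on w z N \<in> cfgs n d"
    using z w N by (intro override_on_in_cfgs[where B = "{..<n} - N"]) (auto simp: cfgs_def cfgs_on_def)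
  from apply_op_QL_op[OF N D this, of \<Psi>] show ?thesis
    unfolding D\<Psi> restrict_override_on override_on_override_on_left by (rule sym)
qed

lemma opmul_QL_op_red_ext_proj:
  assumes N: "N \<subseteq> {..<n}" and D: "QL_op n d N D" and D\<Psi>: "apply_op n d D \<Psi> = (\<lambda>_. 0)"
  shows "opmul n d D (red_ext n d N (proj \<Psi>)) = (\<lambda>_ _. 0)"
proof (intro ext)
  fix z y
  let ?C = "{..<n} - N"
  obtain Y where Y: "\<forall>x\<in>cfgs n d. \<forall>y\<in>cfgs n d.
      D x y = (if \<forall>a\<in>?C. x a = y a then Y (restrict x N) (restrict y N) else 0)"
    using D unfolding QL_op_def by blast
  show "opmul n d D (red_ext n d N (proj \<Psi>)) z y = 0"
  proof (cases "z \<in> cfgs n d \<and> y \<in> cfgs n d")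
    case False
    then show ?thesis by (auto simp: opmul_def)
  next
    case True
    then have z: "z \<in> cfgs n d" by blast
    have agree: "(\<forall>a\<in>?C. override_on z s N a = y a) \<longleftrightarrow> (\<forall>a\<in>?C. z a = y a)" for s
      by simp
    have "opmul n d D (red_ext n d N (proj \<Psi>)) z y
        = apply_op n d D (\<lambda>x. red_ext n d N (proj \<Psi>) x y) z"
      using True by (simp add: opmul_def apply_op_def)
    also have "\<dots> = (\<Sum>s\<in>cfgs_on N d.
        Y (restrict z N) s * red_ext n d N (proj \<Psi>) (override_on z s N) y)"
      by (rule apply_op_QL_op[OF N Y z])
    finally have entry: "opmul n d D (red_ext n d N (proj \<Psi>)) z y = \<dots>" .
    show ?thesis
    proof (cases "\<forall>a\<in>?C. z a = y a")
      case False
      then show ?thesis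
        by (simp only: entry red_ext_proj agree if_False mult_zero_right sum.neutral_const)
    next
      case True
      have "opmul n d D (red_ext n d N (proj \<Psi>)) z y = (\<Sum>s\<in>cfgs_on N d. \<Sum>w\<in>cfgs_on ?C d.
          cnj (\<Psi> (override_on w y N)) * (Y (restrict z N) s * \<Psi> (override_on w s N)))"
        using True
        by (simp add: entry red_ext_proj agree override_on_override_on_right sum_distrib_left mult_ac)
      also have "\<dots> = (\<Sum>w\<in>cfgs_on ?C d. cnj (\<Psi> (override_on w y N)) *
          (\<Sum>s\<in>cfgs_on N d. Y (restrict z N) s * \<Psi> (override_on w s N)))"
        by (subst sum.swap) (simp add: sum_distrib_left)
      also have "\<dots> = 0"
        by (simp add: QL_op_symbol_slice_eq_0[OF N Y D\<Psi> z])
      finally show ?thesis .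
    qed
  qed
qed

lemma apply_op_opmul:
  "apply_op n d (opmul n d A B) v = apply_op n d A (apply_op n d B v)"
proof
  fix x
  show "apply_op n d (opmul n d A B) v x = apply_op n d A (apply_op n d B v) x"
  proof (cases "x \<in> cfgs n d")
    case True
    have "apply_op n d (opmul n d A B) v x = (\<Sum>y\<in>cfgs n d. \<Sum>z\<in>cfgs n d. A x z * B z y * v y)"
      using True by (simp add: apply_op_def opmul_def sum_distrib_right)
    also have "\<dots> = (\<Sum>z\<in>cfgs n d. \<Sum>y\<in>cfgs n d. A x z * B z y * v y)"
      by (rule sum.swap)
    also have "\<dots> = apply_op n d A (apply_op n d B v) x"
      using True by (simp add: apply_op_def sum_distrib_left mult.assoc)
    finally show ?thesis .
  qed (simp add: apply_op_def)
qed

lemma apply_op_zero_op: "apply_op n d (\<lambda>_ _. 0) v = (\<lambda>_. 0)"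
  by (simp add: apply_op_def fun_eq_iff)

lemma apply_op_zero_vec: "apply_op n d X (\<lambda>_. 0) = (\<lambda>_. 0)"
  by (simp add: apply_op_def fun_eq_iff)

lemma QL_op_annihilates_supp_red_ext_proj:
  assumes "N \<subseteq> {..<n}" and "QL_op n d N D" and "apply_op n d D \<Psi> = (\<lambda>_. 0)"
    and "\<phi> \<in> supp n d (red_ext n d N (proj \<Psi>))"
  shows "apply_op n d D \<phi> = (\<lambda>_. 0)"
proof -
  obtain v where "\<phi> = apply_op n d (red_ext n d N (proj \<Psi>)) v"
    using assms(4) by (auto simp: supp_def)
  then show ?thesis
    by (simp add: apply_op_opmul[symmetric] opmul_QL_op_red_ext_proj[OF assms(1-3)] apply_op_zero_op)
qed

lemma QL_annihilates_H0:
  assumes "\<forall>k<m. Nb k \<subseteq> {..<n}" and "QL n d Nb m D" and "apply_op n d D \<Psi> = (\<lambda>_. 0)"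
    and "\<phi> \<in> H0 n d Nb m (proj \<Psi>)"
  shows "apply_op n d D \<phi> = (\<lambda>_. 0)"
proof -
  obtain k where "k < m" and "QL_op n d (Nb k) D"
    using assms(2) by (auto simp: QL_def)
  with assms show ?thesis
    by (auto simp: H0_def intro: QL_op_annihilates_supp_red_ext_proj)
qed

lemma inner_commute_cnj: "inner n d u v = cnj (inner n d v u)"
  by (simp add: inner_def mult_ac)

lemma inner_lincomb_right:
  "inner n d u (\<lambda>x. a * v x + b * w x) = a * inner n d u v + b * inner n d u w"
  by (simp add: inner_def sum.distrib sum_distrib_left algebra_simps)

lemma hermitian_entry_cnj:
  assumes "hermitian n d X" "x \<in> cfgs n d" "y \<in> cfgs n d"
  shows "cnj (X y x) = X x y"
  using assms unfolding hermitian_def by metis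

lemma hermitian_inner_apply_op:
  assumes H: "hermitian n d X"
  shows "inner n d u (apply_op n d X v) = inner n d (apply_op n d X u) v"
proof -
  have "inner n d u (apply_op n d X v) = (\<Sum>x\<in>cfgs n d. \<Sum>y\<in>cfgs n d. cnj (u x) * X x y * v y)"
    by (simp add: inner_def apply_op_def sum_distrib_left mult.assoc)
  also have "\<dots> = (\<Sum>y\<in>cfgs n d. \<Sum>x\<in>cfgs n d. cnj (X y x * u x) * v y)"
    by (subst sum.swap) (auto intro!: sum.cong simp: hermitian_entry_cnj[OF H] mult_ac)
  also have "\<dots> = inner n d (apply_op n d X u) v"
    by (simp add: inner_def apply_op_def sum_distrib_right)
  finally show ?thesis .
qed

lemma hermitian_sum_list:
  assumes "\<forall>X\<in>set Xs. hermitian n d X"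
  shows "hermitian n d (\<lambda>x y. sum_list (map (\<lambda>X. X x y) Xs))"
  unfolding hermitian_def
proof (intro ballI)
  fix x y assume "x \<in> cfgs n d" "y \<in> cfgs n d"
  with assms show "sum_list (map (\<lambda>X. X x y) Xs) = cnj (sum_list (map (\<lambda>X. X y x) Xs))"
    by (induction Xs) (auto simp: hermitian_entry_cnj)
qed

lemma QL_Ham_hermitian:
  assumes "QL_Ham n d Nb m H"
  shows "hermitian n d H"
proof -
  obtain Hs where Hs: "\<forall>X\<in>set Hs. hermitian n d X"
    and H: "\<forall>x\<in>cfgs n d. \<forall>y\<in>cfgs n d. H x y = sum_list (map (\<lambda>X. X x y) Hs)"
    using assms by (auto simp: QL_Ham_def)
  show ?thesis
    unfolding hermitian_def
  proof (intro ballI)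
    fix x y assume xy: "x \<in> cfgs n d" "y \<in> cfgs n d"
    have "sum_list (map (\<lambda>X. X x y) Hs) = cnj (sum_list (map (\<lambda>X. X y x) Hs))"
      using hermitian_sum_list[OF Hs] xy unfolding hermitian_def by blast
    with H xy show "H x y = cnj (H y x)"
      by simp
  qed
qed

lemma hermitian_eigvec_of_span:
  assumes H: "hermitian n d H" and H\<Psi>: "apply_op n d H \<Psi> = (\<lambda>_. 0)"
    and H\<Phi>: "apply_op n d H \<Phi> = (\<lambda>x. a * \<Psi> x + b * \<Phi> x)"
    and "inner n d \<Psi> \<Psi> = 1" "inner n d \<Phi> \<Phi> = 1" "inner n d \<Psi> \<Phi> = 0"
  shows "apply_op n d H \<Phi> = (\<lambda>x. complex_of_real (Re b) * \<Phi> x)"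
proof -
  have \<Phi>\<Psi>: "inner n d \<Phi> \<Psi> = 0"
    using assms(6) by (simp add: inner_commute_cnj[of n d \<Phi>])
  have "a = inner n d \<Psi> (apply_op n d H \<Phi>)"
    using assms(4,6) by (simp add: H\<Phi> inner_lincomb_right)
  also have "\<dots> = 0"
    unfolding hermitian_inner_apply_op[OF H] H\<Psi> by (simp add: inner_def)
  finally have a: "a = 0" .
  have b: "b = inner n d \<Phi> (apply_op n d H \<Phi>)"
    using assms(5) \<Phi>\<Psi> by (simp add: H\<Phi> inner_lincomb_right)
  have "inner n d \<Phi> (apply_op n d H \<Phi>) = cnj (inner n d \<Phi> (apply_op n d H \<Phi>))"
    by (subst inner_commute_cnj) (simp add: hermitian_inner_apply_op[OF H])
  with b have "b = cnj b"
    by simp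
  then have "b = complex_of_real (Re b)"
    by (simp add: complex_eq_iff)
  with H\<Phi> a show ?thesis
    by simp
qed

lemma opmul_proj_right:
  "opmul n d X (proj \<Phi>) = (\<lambda>x y. if x \<in> cfgs n d \<and> y \<in> cfgs n d
     then apply_op n d X \<Phi> x * cnj (\<Phi> y) else 0)"
  by (simp add: opmul_def apply_op_def proj_def fun_eq_iff sum_distrib_right mult.assoc)

lemma opmul_proj_left:
  "opmul n d (proj \<Phi>) X = (\<lambda>x y. if x \<in> cfgs n d \<and> y \<in> cfgs n d
     then \<Phi> x * cnj (apply_op n d (adj X) \<Phi> y) else 0)"
  by (simp add: opmul_def apply_op_def proj_def adj_def fun_eq_iff sum_distrib_left mult_ac)

lemma opmul_zero_left: "opmul n d (\<lambda>_ _. 0) X = (\<lambda>_ _. 0)"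
  by (simp add: opmul_def fun_eq_iff)

lemma opmul_zero_right: "opmul n d X (\<lambda>_ _. 0) = (\<lambda>_ _. 0)"
  by (simp add: opmul_def fun_eq_iff)

lemma hermitian_apply_op_adj:
  assumes "hermitian n d X"
  shows "apply_op n d (adj X) = apply_op n d X"
  using assms by (auto simp: apply_op_def adj_def fun_eq_iff hermitian_entry_cnj intro!: sum.cong)

lemma hermitian_opmul_adj_self: "hermitian n d (opmul n d (adj D) D)"
  by (auto simp: hermitian_def opmul_def adj_def mult_ac)

lemma lindblad_zero: "lindblad n d H Ds (\<lambda>_ _. 0) = (\<lambda>_ _. 0)"
  by (simp add: lindblad_def opmul_zero_left opmul_zero_right fun_eq_iff)

lemma lindblad_proj_eigvec:
  assumes H: "hermitian n d H"
    and H\<Phi>: "apply_op n d H \<Phi> = (\<lambda>x. complex_of_real \<mu> * \<Phi> x)"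
    and D\<Phi>: "\<forall>D\<in>set Ds. apply_op n d D \<Phi> = (\<lambda>_. 0)"
  shows "lindblad n d H Ds (proj \<Phi>) = (\<lambda>_ _. 0)"
proof -
  have commute: "opmul n d H (proj \<Phi>) = opmul n d (proj \<Phi>) H"
    by (simp add: opmul_proj_right opmul_proj_left hermitian_apply_op_adj[OF H] H\<Phi> fun_eq_iff)
  have D\<Phi>0: "apply_op n d D \<Phi> = (\<lambda>_. 0)" if "D \<in> set Ds" for D
    using D\<Phi> that by blast
  have DG: "apply_op n d (opmul n d (adj D) D) \<Phi> = (\<lambda>_. 0)" if "D \<in> set Ds" for D
    by (simp add: apply_op_opmul D\<Phi>0[OF that] apply_op_zero_vec)
  have "opmul n d (opmul n d D (proj \<Phi>)) (adj D) = (\<lambda>_ _. 0)" if "D \<in> set Ds" for D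
  proof -
    have "opmul n d D (proj \<Phi>) = (\<lambda>_ _. 0)"
      by (simp add: opmul_proj_right D\<Phi>0[OF that] fun_eq_iff)
    then show ?thesis
      by (simp add: opmul_zero_left)
  qed
  moreover have "opmul n d (opmul n d (adj D) D) (proj \<Phi>) = (\<lambda>_ _. 0)" if "D \<in> set Ds" for D
    by (simp add: opmul_proj_right DG[OF that] fun_eq_iff)
  moreover have "opmul n d (proj \<Phi>) (opmul n d (adj D) D) = (\<lambda>_ _. 0)" if "D \<in> set Ds" for D
    by (simp add: opmul_proj_left hermitian_apply_op_adj[OF hermitian_opmul_adj_self] DG[OF that]
        fun_eq_iff)
  ultimately show ?thesis
    using commute by (simp add: lindblad_def fun_eq_iff cong: map_cong)
qed

lemma expL_stationary:
  assumes "L \<rho> = (\<lambda>_ _. 0)" and "L (\<lambda>_ _. 0) = (\<lambda>_ _. 0)"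
  shows "expL L t \<rho> = \<rho>"
  unfolding expL_def
proof (intro ext)
  fix x y
  have "(L ^^ k) (\<lambda>_ _. 0) = (\<lambda>_ _. 0)" for k
    by (induction k) (simp_all add: assms(2))
  then have "(L ^^ Suc k) \<rho> = (\<lambda>_ _. 0)" for k
    by (simp only: funpow_Suc_right comp_def assms(1))
  then have "(\<lambda>k. complex_of_real (t ^ k / fact k) * (L ^^ k) \<rho> x y)
      = (\<lambda>k. if k = 0 then \<rho> x y else 0)"
    by (intro ext, case_tac k) (simp_all del: funpow.simps)
  moreover have "(\<lambda>k. if k = 0 then \<rho> x y else 0) sums \<rho> x y"
    using sums_single[of 0 "\<lambda>_. \<rho> x y"] by simp
  ultimately show "(\<Sum>k. complex_of_real (t ^ k / fact k) * (L ^^ k) \<rho> x y) = \<rho> x y"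
    by (simp add: sums_unique[symmetric])
qed

lemma density_proj:
  assumes "inner n d \<Phi> \<Phi> = 1"
  shows "density n d (proj \<Phi>)"
proof -
  have "0 \<le> Re (inner n d v (apply_op n d (proj \<Phi>) v))" for v
  proof -
    let ?c = "\<Sum>y\<in>cfgs n d. cnj (\<Phi> y) * v y"
    have "inner n d v (apply_op n d (proj \<Phi>) v) = (\<Sum>x\<in>cfgs n d. cnj (v x) * (\<Phi> x * ?c))"
      by (simp add: inner_def apply_op_def proj_def sum_distrib_left mult.assoc)
    also have "\<dots> = (\<Sum>x\<in>cfgs n d. cnj (v x) * \<Phi> x) * ?c"
      by (simp add: sum_distrib_right mult.assoc)
    also have "(\<Sum>x\<in>cfgs n d. cnj (v x) * \<Phi> x) = cnj ?c"
      by (simp add: mult.commute)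
    also have "cnj ?c * ?c = complex_of_real ((Re ?c)\<^sup>2 + (Im ?c)\<^sup>2)"
      using complex_mult_cnj[of ?c] by (simp only: mult.commute)
    finally have "inner n d v (apply_op n d (proj \<Phi>) v) = complex_of_real ((Re ?c)\<^sup>2 + (Im ?c)\<^sup>2)" .
    then show ?thesis
      by (simp only: Re_complex_of_real add_nonneg_nonneg zero_le_power2)
  qed
  moreover have "(\<Sum>x\<in>cfgs n d. proj \<Phi> x x) = 1"
    using assms by (simp add: inner_def proj_def mult_ac)
  ultimately show ?thesis
    by (auto simp: density_def hermitian_def proj_def)
qed

lemma GAS_stationary_eq:
  assumes GAS: "GAS n d L \<rho>d" and "density n d \<rho>"
    and "L \<rho> = (\<lambda>_ _. 0)" and "L (\<lambda>_ _. 0) = (\<lambda>_ _. 0)"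
    and "x \<in> cfgs n d" and "y \<in> cfgs n d"
  shows "\<rho> x y = \<rho>d x y"
proof -
  have "\<forall>x\<in>cfgs n d. \<forall>y\<in>cfgs n d. ((\<lambda>t. expL L t \<rho> x y) \<longlongrightarrow> \<rho>d x y) at_top"
    using GAS \<open>density n d \<rho>\<close> unfolding GAS_def by blast
  then have "((\<lambda>t::real. \<rho> x y) \<longlongrightarrow> \<rho>d x y) at_top"
    using assms(5,6) by (simp add: expL_stationary[of L \<rho>, OF assms(3,4)])
  then show ?thesis
    by (simp add: tendsto_const_iff)
qed

lemma proj_orthogonal_neq:
  assumes "inner n d \<Psi> \<Psi> = 1" and "inner n d \<Psi> \<Phi> = 0"
  shows "\<exists>x\<in>cfgs n d. \<exists>y\<in>cfgs n d. proj \<Phi> x y \<noteq> proj \<Psi> x y"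
proof (rule ccontr)
  assume "\<not> ?thesis"
  then have "(\<Sum>y\<in>cfgs n d. proj \<Phi> x y * \<Psi> y) = (\<Sum>y\<in>cfgs n d. proj \<Psi> x y * \<Psi> y)"
    if "x \<in> cfgs n d" for x
    using that by (auto intro: sum.cong)
  then have "\<Phi> x * cnj (inner n d \<Psi> \<Phi>) = \<Psi> x * inner n d \<Psi> \<Psi>" if "x \<in> cfgs n d" for x
    using that by (simp add: proj_def inner_def sum_distrib_left mult_ac)
  then have "\<Psi> x = 0" if "x \<in> cfgs n d" for x
    using that assms by simp
  then have "inner n d \<Psi> \<Psi> = 0"
    by (simp add: inner_def)
  with assms(1) show False
    by simp
qed

lemma not_GAS_proj_of_orthogonal_eigvec:
  assumes "hermitian n d H"
    and "apply_op n d H \<Phi> = (\<lambda>x. complex_of_real \<mu> * \<Phi> x)"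
    and "\<forall>D\<in>set Ds. apply_op n d D \<Phi> = (\<lambda>_. 0)"
    and "inner n d \<Phi> \<Phi> = 1" "inner n d \<Psi> \<Psi> = 1" "inner n d \<Psi> \<Phi> = 0"
  shows "\<not> GAS n d (lindblad n d H Ds) (proj \<Psi>)"
proof
  assume GAS: "GAS n d (lindblad n d H Ds) (proj \<Psi>)"
  obtain x y where xy: "x \<in> cfgs n d" "y \<in> cfgs n d" and "proj \<Phi> x y \<noteq> proj \<Psi> x y"
    using proj_orthogonal_neq[OF assms(5,6)] by blast
  moreover have "proj \<Phi> x y = proj \<Psi> x y"
    using GAS_stationary_eq[of n d "lindblad n d H Ds" _ "proj \<Phi>", OF GAS density_proj[OF assms(4)]
        lindblad_proj_eigvec[OF assms(1-3)] lindblad_zero xy] .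
  ultimately show False
    by blast
qed

lemma QL_op_scalar: "QL_op n d N (\<lambda>x y. if x = y then c else 0)"
  unfolding QL_op_def
proof (intro exI ballI)
  fix x y assume x: "x \<in> cfgs n d" and y: "y \<in> cfgs n d"
  have "x = y" if "\<forall>a\<in>{..<n} - N. x a = y a" and "restrict x N = restrict y N"
    using x y that unfolding cfgs_def
    by (elim PiE_ext) (auto simp: fun_eq_iff split: if_splits)
  then show "(if x = y then c else 0) = (if \<forall>a\<in>{..<n} - N. x a = y a
      then (\<lambda>s s'. if s = s' then c else 0) (restrict x N) (restrict y N) else 0)"
    by auto
qed

lemma QL_Ham_add_scalar:
  assumes "QL_Ham n d Nb m H" and "0 < m"
  shows "QL_Ham n d Nb m (\<lambda>x y. H x y + (if x = y then complex_of_real c else 0))"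
proof -
  obtain Hs where "\<forall>X\<in>set Hs. hermitian n d X \<and> QL n d Nb m X"
    and "\<forall>x\<in>cfgs n d. \<forall>y\<in>cfgs n d. H x y = sum_list (map (\<lambda>X. X x y) Hs)"
    using assms(1) by (auto simp: QL_Ham_def)
  moreover have "hermitian n d (\<lambda>x y. if x = y then complex_of_real c else 0)"
    by (simp add: hermitian_def)
  moreover have "QL n d Nb m (\<lambda>x y. if x = y then complex_of_real c else 0)"
    using assms(2) QL_op_scalar by (auto simp: QL_def)
  ultimately show ?thesis
    unfolding QL_Ham_def
    by (intro exI[of _ "Hs @ [\<lambda>x y. if x = y then complex_of_real c else 0]"]) auto
qed

lemma apply_op_add_scalar:
  assumes "is_vec n d v"
  shows "apply_op n d (\<lambda>x y. X x y + (if x = y then c else 0)) v = (\<lambda>x. apply_op n d X v x + c * v x)"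
proof
  fix x
  show "apply_op n d (\<lambda>x y. X x y + (if x = y then c else 0)) v x = apply_op n d X v x + c * v x"
  proof (cases "x \<in> cfgs n d")
    case True
    then have "(\<Sum>y\<in>cfgs n d. (if x = y then c else 0) * v y) = c * v x"
      by (simp add: if_distrib[of "\<lambda>a. a * _"] finite_cfgs cong: if_cong)
    with True show ?thesis
      by (simp add: apply_op_def sum.distrib distrib_right)
  next
    case False
    with assms show ?thesis
      by (simp add: apply_op_def is_vec_def)
  qed
qed

lemma QL_Ham_no_neighbourhoods:
  assumes "QL_Ham n d Nb 0 H"
  shows "apply_op n d H v = (\<lambda>_. 0)"
proof -
  obtain Hs where "\<forall>X\<in>set Hs. QL n d Nb 0 X"
    and H: "\<forall>x\<in>cfgs n d. \<forall>y\<in>cfgs n d. H x y = sum_list (map (\<lambda>X. X x y) Hs)"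
    using assms by (auto simp: QL_Ham_def)
  then have "Hs = []"
    by (cases Hs) (auto simp: QL_def)
  with H show ?thesis
    by (simp add: apply_op_def fun_eq_iff)
qed

lemma QL_Ham_real_eigvec_if_span_invariant:
  assumes Hc: "QL_Ham n d Nb m Hc"
    and Hc\<Psi>: "apply_op n d Hc \<Psi> = (\<lambda>x. complex_of_real r * \<Psi> x)"
    and vecs: "is_vec n d \<Psi>" "is_vec n d \<Phi>"
    and orthonormal: "inner n d \<Psi> \<Psi> = 1" "inner n d \<Phi> \<Phi> = 1" "inner n d \<Psi> \<Phi> = 0"
    and span: "\<forall>H. QL_Ham n d Nb m H \<and> apply_op n d H \<Psi> = (\<lambda>_. 0) \<longrightarrow>
      (\<exists>a b. apply_op n d H \<Phi> = (\<lambda>x. a * \<Psi> x + b * \<Phi> x))"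
  shows "\<exists>\<mu>. apply_op n d Hc \<Phi> = (\<lambda>x. complex_of_real \<mu> * \<Phi> x)"
proof (cases "m = 0")
  case True
  then show ?thesis
    using QL_Ham_no_neighbourhoods Hc by fastforce
next
  case False
  define Hs where "Hs = (\<lambda>x y. Hc x y + (if x = y then complex_of_real (- r) else 0))"
  have Hs: "QL_Ham n d Nb m Hs"
    unfolding Hs_def using Hc False by (intro QL_Ham_add_scalar) auto
  have shift: "apply_op n d Hs v = (\<lambda>x. apply_op n d Hc v x - complex_of_real r * v x)"
    if "is_vec n d v" for v
    unfolding Hs_def using apply_op_add_scalar[OF that] by simp
  have Hs\<Psi>: "apply_op n d Hs \<Psi> = (\<lambda>_. 0)"
    by (simp add: shift[OF vecs(1)] Hc\<Psi>)
  with span Hs obtain a b where "apply_op n d Hs \<Phi> = (\<lambda>x. a * \<Psi> x + b * \<Phi> x)"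
    by blast
  then have "apply_op n d Hs \<Phi> = (\<lambda>x. complex_of_real (Re b) * \<Phi> x)"
    using hermitian_eigvec_of_span[OF QL_Ham_hermitian[OF Hs] Hs\<Psi>] orthonormal by blast
  then show ?thesis
    by (intro exI[of _ "Re b + r"]) (auto simp: shift[OF vecs(2)] fun_eq_iff algebra_simps)
qed

theorem corollary3:
  fixes n :: nat and d :: "nat \<Rightarrow> nat" and Nb :: "nat \<Rightarrow> nat set" and m :: nat
    and \<Psi> \<Phi>1 :: vec
  assumes nbhd: "\<forall>k<m. Nb k \<subset> {..<n}"
    and vecs: "is_vec n d \<Psi>" "is_vec n d \<Phi>1"
    and orthonormal: "inner n d \<Psi> \<Psi> = 1" "inner n d \<Phi>1 \<Phi>1 = 1" "inner n d \<Psi> \<Phi>1 = 0"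
    and qls: "QLS n d Nb m \<Psi>"
    and not_dqls: "\<not> DQLS n d Nb m \<Psi>"
    and H0_span: "H0 n d Nb m (proj \<Psi>) = {(\<lambda>x. a * \<Psi> x + b * \<Phi>1 x) | a b. True}"
  shows "\<exists>Hc. QL_Ham n d Nb m Hc \<and> apply_op n d Hc \<Psi> = (\<lambda>_. 0)
           \<and> apply_op n d Hc \<Phi>1 \<notin> H0 n d Nb m (proj \<Psi>)"
proof (rule ccontr)
  assume "\<not> ?thesis"
  then have span: "\<forall>H. QL_Ham n d Nb m H \<and> apply_op n d H \<Psi> = (\<lambda>_. 0) \<longrightarrow>
      (\<exists>a b. apply_op n d H \<Phi>1 = (\<lambda>x. a * \<Psi> x + b * \<Phi>1 x))"
    unfolding H0_span by blast
  obtain Hc Ds r where Hc: "QL_Ham n d Nb m Hc"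
    and Ds: "\<forall>D\<in>set Ds. QL n d Nb m D \<and> apply_op n d D \<Psi> = (\<lambda>_. 0)"
    and Hc\<Psi>: "apply_op n d Hc \<Psi> = (\<lambda>x. complex_of_real r * \<Psi> x)"
    and GAS: "GAS n d (lindblad n d Hc Ds) (proj \<Psi>)"
    using qls unfolding QLS_def by blast
  have "\<Phi>1 \<in> H0 n d Nb m (proj \<Psi>)"
    unfolding H0_span by (rule CollectI, rule exI[of _ 0], rule exI[of _ 1]) simp
  then have dark: "\<forall>D\<in>set Ds. apply_op n d D \<Phi>1 = (\<lambda>_. 0)"
    using Ds nbhd by (auto intro: QL_annihilates_H0)
  obtain \<mu> where "apply_op n d Hc \<Phi>1 = (\<lambda>x. complex_of_real \<mu> * \<Phi>1 x)"
    using QL_Ham_real_eigvec_if_span_invariant[OF Hc Hc\<Psi> vecs orthonormal span] by blast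
  from not_GAS_proj_of_orthogonal_eigvec[OF QL_Ham_hermitian[OF Hc] this dark orthonormal(2,1,3)]
  show False
    using GAS ..
qed

end
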